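(* Let $\chi,b,\nu,\mu>0$, $c\in\mathbb{R}$, $r$ as in the context, and assume $b>2\chi\mu$ and $c>\frac{\chi\mu r^*}{2\sqrt{\nu}(b-\chi\mu)}-2\sqrt{\frac{r^*(b-2\chi\mu)}{b-\chi\mu}}$. Let $u\in\mathcal{E}_1$, and suppose $U_{1*}(\cdot;u)\in\mathcal{E}_1$ is also a solution of $$0=U_{xx}+(c-\chi\Psi_x(x;u))U_x+(r(x)-\chi\nu\Psi(x;u)-(b-\chi\mu)U)U,\quad x\in\mathbb{R}.$$ Then $\lim_{x\to\infty}\frac{U_{1*}(x;u)}{U_1^*(x;u)}=1$.
   Context: $r$ is globally Hölder continuous and bounded, with finite limits $r(\pm\infty)$, $r(-\infty)<0<r(\infty)$, $r(-\infty)\le r(x)\le r(\infty)$; $r^*=\sup r=r(\infty)$. $C^b_{\rm unif}(\mathbb{R})$: bounded uniformly continuous functions; $\Psi(x;u)=\frac{\mu}{2\sqrt\nu}\int_{\mathbb{R}}e^{-\sqrt\nu|x-y|}u(y)dy$; $\mathcal{A}_u(U)=U_{xx}+(c-\chi\Psi_x(x;u))U_x+(r(x)-\chi\nu\Psi(x;u)-(b-\chi\mu)U)U$. Fix $r_1\in(r(-\infty),0)$, $x_1$ with $r(x)\le r_1$ for $x\le x_1$, $\theta_1$ the positive root of $\theta^2+c\theta+r_1=0$, and $U_1^+(x)=\min\{\frac{r^*}{b-\chi\mu},\frac{r^*}{b-\chi\mu}e^{\theta_1(x-x_1)}\}$. For $\varepsilon>0$ let $f_\varepsilon(u)=u(r^*-\varepsilon-\frac{\chi\mu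 r^*}{b-\chi\mu}-(b-\chi\mu)u)$ for $u\ge0$, $f_\varepsilon=0$ on $[-\varepsilon,0)$; let $(\phi_\varepsilon,\tilde c_\varepsilon)$ be a decreasing traveling wave: $\phi_\varepsilon''+\tilde c_\varepsilon\phi_\varepsilon'+f_\varepsilon(\phi_\varepsilon)=0$, $\phi_\varepsilon(-\infty)=\frac{(r^*-\varepsilon)(b-\chi\mu)-\chi\mu r^*}{(b-\chi\mu)^2}$, $\phi_\varepsilon(\infty)=-\varepsilon$ (such waves exist with $\tilde c_\varepsilon\to2\sqrt{r^*(b-2\chi\mu)/(b-\chi\mu)}$ as $\varepsilon\to0^+$). With $\delta:=c-\frac{\chi\mu r^*}{2\sqrt\nu(b-\chi\mu)}+2\sqrt{\frac{r^*(b-2\chi\mu)}{b-\chi\mu}}>0$, fix $\varepsilon\in\big(0,\frac{r^*(b-2\chi\mu)}{b-\chi\mu}\big)$ with $\tilde c_\varepsilon>2\sqrt{\frac{r^*(b-2\chi\mu)}{b-\chi\mu}}-\frac\delta2$. Let $\psi_\varepsilon(x)=\phi_\varepsilon(-x)$, translated so that $\psi_\varepsilon(x_0)=0$ for some $x_0>x_1$ with $r(x)\ge r^*-\varepsilon$ for $x>x_0$. $U_1^-=\max\{\psi_\varepsilon,0\}$, $\mathcal{E}_1=\{u\in C^b_{\rm unif}(\mathbb{R}):U_1^-\le u\le U_1^+\}$. For $u\in\mathcal{E}_1$, $U_1^*(x;u)=\lim_{t\to\infty}U(t,x;u)$ where $U(t,x;u)$ solves $U_t=\mathcal{A}_u(U)$,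 $U(0,\cdot;u)=U_1^+$ (this limit exists, lies in $\mathcal{E}_1$ and solves the displayed elliptic equation). *)

theory Defs
  imports "HOL-Analysis.Analysis"
begin

definition holder_cont :: "(real \<Rightarrow> real) \<Rightarrow> bool" where
  "holder_cont f \<longleftrightarrow> (\<exists>\<alpha> L. 0 < \<alpha> \<and> \<alpha> \<le> 1 \<and> 0 \<le> L \<and>
      (\<forall>x y. \<bar>f x - f y\<bar> \<le> L * \<bar>x - y\<bar> powr \<alpha>))"

definition Cb_unif :: "(real \<Rightarrow> real) set" where
  "Cb_unif = {u. bounded (range u) \<and> uniformly_continuous_on UNIV u}"

definition Psi :: "real \<Rightarrow> real \<Rightarrow> (real \<Rightarrow> real) \<Rightarrow> real \<Rightarrow> real" where
  "Psi \<mu> \<nu> u x = \<mu> / (2 * sqrt \<nu>) * (LINT y|lborel. exp (- sqrt \<nu> * \<bar>x - y\<bar>) * u y)"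

definition Psi_x :: "real \<Rightarrow> real \<Rightarrow> (real \<Rightarrow> real) \<Rightarrow> real \<Rightarrow> real" where
  "Psi_x \<mu> \<nu> u x = deriv (Psi \<mu> \<nu> u) x"

definition elliptic_sol ::
  "real \<Rightarrow> real \<Rightarrow> real \<Rightarrow> real \<Rightarrow> real \<Rightarrow> (real \<Rightarrow> real) \<Rightarrow> (real \<Rightarrow> real)
     \<Rightarrow> (real \<Rightarrow> real) \<Rightarrow> bool" where
  "elliptic_sol chi b \<nu> \<mu> c r u W \<longleftrightarrow>
     (\<exists>W' W''. \<forall>x. (W has_real_derivative W' x) (at x) \<and>
        (W' has_real_derivative W'' x) (at x) \<and>
        W'' x + (c - chi * Psi_x \<mu> \<nu> u x) * W' x
          + (r x - chi * \<nu> * Psi \<mu> \<nu> u x - (b - chi * \<mu>) * W x) * W x = 0)"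

definition parabolic_sol ::
  "real \<Rightarrow> real \<Rightarrow> real \<Rightarrow> real \<Rightarrow> real \<Rightarrow> (real \<Rightarrow> real) \<Rightarrow> (real \<Rightarrow> real)
     \<Rightarrow> (real \<Rightarrow> real) \<Rightarrow> (real \<Rightarrow> real \<Rightarrow> real) \<Rightarrow> bool" where
  "parabolic_sol chi b \<nu> \<mu> c r u U0 U \<longleftrightarrow>
     continuous_on ({0..} \<times> UNIV) (\<lambda>(t, x). U t x) \<and>
     bounded ((\<lambda>(t, x). U t x) ` ({0..} \<times> UNIV)) \<and>
     (\<forall>x. U 0 x = U0 x) \<and>
     (\<exists>Ut Ux Uxx. \<forall>t>0. \<forall>x.
        ((\<lambda>s. U s x) has_real_derivative Ut t x) (at t) \<and>
        ((\<lambda>y. U t y) has_real_derivative Ux t x) (at x) \<and>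
        ((\<lambda>y. Ux t y) has_real_derivative Uxx t x) (at x) \<and>
        Ut t x = Uxx t x + (c - chi * Psi_x \<mu> \<nu> u x) * Ux t x
          + (r x - chi * \<nu> * Psi \<mu> \<nu> u x - (b - chi * \<mu>) * U t x) * U t x)"

text \<open>f_eps(u) (only used for u >= -eps).\<close>
definition f_eps :: "real \<Rightarrow> real \<Rightarrow> real \<Rightarrow> real \<Rightarrow> real \<Rightarrow> real \<Rightarrow> real" where
  "f_eps chi b \<mu> rstar \<epsilon> v =
     (if 0 \<le> v then v * (rstar - \<epsilon> - chi * \<mu> * rstar / (b - chi * \<mu>) - (b - chi * \<mu>) * v)
      else 0)"

end

(*
  Both U_1^*(.;u) and U_1*(.;u) solve the same stationary logistic equation
  V'' + a V' + (q - beta V) V = 0 with beta = b - chi mu, whose coefficients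
  a = c - chi Psi_x(.;u) and q = r - chi nu Psi(.;u) are bounded because u is.
  Bounded solutions of such an equation have bounded derivatives, and the lower
  barrier psi_eps keeps both solutions above a positive constant near +infinity.
  The quotient w = W / V then solves w'' + (2 V' / V + a) w' + beta V w (1 - w) = 0,
  a logistic equation with bounded drift and reaction coefficient bounded below.
  On a half-line a bounded solution of it cannot stay above 1 + eps: where w > 1
  it must decrease, and a persistent excess over 1 makes w' grow exponentially.
  Exchanging V and W gives the reverse bound, so W / V tends to 1.
*)
theory Submission
  imports Defs
begin

section \<open>Differential inequalities on a half-line\<close>

lemma gronwall_lower_bound:
  fixes z z' :: "real \<Rightarrow> real" and a b G :: real
  assumes "a \<le> b"
    and deriv: "\<And>s. a \<le> s \<Longrightarrow> s \<le> b \<Longrightarrow> (z has_real_derivative z' s) (at s)"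
    and ineq: "\<And>s. a \<le> s \<Longrightarrow> s \<le> b \<Longrightarrow> G * z s \<le> z' s"
  shows "z a * exp (G * (b - a)) \<le> z b"
proof -
  define y where "y s = z s * exp (- G * (s - a))" for s
  have "y a \<le> y b"
  proof (rule DERIV_nonneg_imp_nondecreasing[OF \<open>a \<le> b\<close>])
    fix s assume s: "a \<le> s" "s \<le> b"
    have "(y has_real_derivative (z' s - G * z s) * exp (- G * (s - a))) (at s)"
      unfolding y_def by (auto intro!: derivative_eq_intros deriv[OF s] simp: algebra_simps)
    then show "\<exists>d. (y has_real_derivative d) (at s) \<and> 0 \<le> d"
      using ineq[OF s] by fastforce
  qed
  then have "z a * exp (G * (b - a)) \<le> z b * exp (- G * (b - a)) * exp (G * (b - a))"
    by (intro mult_right_mono) (simp_all add: y_def)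
  then show ?thesis by (simp add: mult.assoc flip: exp_add)
qed

lemma first_root_after:
  fixes g :: "real \<Rightarrow> real" and a b :: real
  assumes "a \<le> b" "continuous_on {a..b} g" "0 < g a" "g b \<le> 0"
  obtains t where "a < t" "t \<le> b" "g t = 0" "\<And>s. a \<le> s \<Longrightarrow> s < t \<Longrightarrow> 0 < g s"
proof -
  define Z where "Z = g -` {0} \<inter> {a..b}"
  have "closed Z"
    unfolding Z_def by (rule closed_vimage_Int[OF closed_singleton assms(2) closed_atLeastAtMost])
  moreover have "bounded Z" by (rule bounded_subset[of "{a..b}"]) (auto simp: Z_def)
  ultimately have "compact Z" by (simp add: compact_eq_bounded_closed)
  moreover have "Z \<noteq> {}"
    using IVT2'[of g b 0 a] assms by (auto simp: Z_def)
  ultimately obtain t where t: "t \<in> Z" and least: "\<And>s. s \<in> Z \<Longrightarrow> t \<le> s"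
    by (meson compact_attains_inf)
  have t: "a \<le> t" "t \<le> b" "g t = 0" using t by (auto simp: Z_def)
  have pos: "0 < g s" if s: "a \<le> s" "s < t" for s
  proof (rule ccontr)
    assume "\<not> 0 < g s"
    moreover have "continuous_on {a..s} g"
      using assms(2) by (rule continuous_on_subset) (use s t in auto)
    ultimately obtain s' where "a \<le> s'" "s' \<le> s" "g s' = 0"
      using IVT2'[of g s 0 a] assms(3) s by fastforce
    then show False using least[of s'] s t by (auto simp: Z_def)
  qed
  have "a \<noteq> t" using t \<open>0 < g a\<close> by auto
  with t pos show thesis by (intro that) auto
qed

lemma deriv_ge_pos_imp_unbounded:
  fixes w w' :: "real \<Rightarrow> real" and a m K :: real
  assumes deriv: "\<And>t. a \<le> t \<Longrightarrow> (w has_real_derivative w' t) (at t)"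
    and slope: "\<And>t. a \<le> t \<Longrightarrow> m \<le> w' t" and "0 < m"
  obtains t where "a \<le> t" "K < \<bar>w t\<bar>"
proof -
  define T where "T = (2 * \<bar>K\<bar> + 1) / m"
  have "0 < T" using \<open>0 < m\<close> by (simp add: T_def)
  then obtain \<xi> where \<xi>: "a < \<xi>" "w (a + T) - w a = T * w' \<xi>"
    using MVT2[of a "a + T" w w'] deriv by auto
  have "T * m \<le> T * w' \<xi>"
    using slope[of \<xi>] \<xi> \<open>0 < T\<close> by (intro mult_left_mono) auto
  moreover have "T * m = 2 * \<bar>K\<bar> + 1" using \<open>0 < m\<close> by (simp add: T_def)
  ultimately have "2 * \<bar>K\<bar> < \<bar>w (a + T)\<bar> + \<bar>w a\<bar>" using \<xi> by linarith
  then have "K < \<bar>w (a + T)\<bar> \<or> K < \<bar>w a\<bar>" by linarith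
  then show thesis using that[of a] that[of "a + T"] \<open>0 < T\<close> by auto
qed

lemma deriv_stays_large:
  fixes f' f'' :: "real \<Rightarrow> real" and A B C x0 t :: real
  assumes deriv': "\<And>x. (f' has_real_derivative f'' x) (at x)"
    and f''_bound: "\<And>x. \<bar>f'' x\<bar> \<le> A * \<bar>f' x\<bar> + B" and "0 < A" "0 \<le> B" "0 \<le> C"
    and start: "C + B / A < (f' x0 + B / A) * exp (- A)"
    and t: "x0 \<le> t" "t \<le> x0 + 1"
  shows "C < f' t"
proof -
  have "0 \<le> C + B / A" using assms by simp
  then have "0 < (f' x0 + B / A) * exp (- A)" using start by linarith
  then have "0 < f' x0 + B / A" by (simp add: zero_less_mult_iff)
  \<comment> \<open>while \<open>f'\<close> stays nonnegative, \<open>f' + B / A\<close> decays at most like \<open>exp (- A t)\<close>\<close>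
  have large: "C < f' s"
    if s: "x0 \<le> s" "s \<le> x0 + 1" and nonneg: "\<And>r. x0 \<le> r \<Longrightarrow> r \<le> s \<Longrightarrow> 0 \<le> f' r" for s
  proof -
    have "(f' x0 + B / A) * exp (- A * (s - x0)) \<le> f' s + B / A"
    proof (rule gronwall_lower_bound[OF s(1)])
      show "((\<lambda>r. f' r + B / A) has_real_derivative f'' r) (at r)" for r
        by (auto intro!: derivative_eq_intros deriv')
      show "- A * (f' r + B / A) \<le> f'' r" if "x0 \<le> r" "r \<le> s" for r
        using f''_bound[of r] nonneg[OF that] \<open>0 < A\<close> by (simp add: algebra_simps abs_le_iff)
    qed
    moreover have "(f' x0 + B / A) * exp (- A) \<le> (f' x0 + B / A) * exp (- A * (s - x0))"
      using \<open>0 < f' x0 + B / A\<close> s \<open>0 < A\<close> by (intro mult_left_mono) auto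
    ultimately show ?thesis using start by linarith
  qed
  have "(f' x0 + B / A) * exp (- A) \<le> f' x0 + B / A"
    using \<open>0 < f' x0 + B / A\<close> \<open>0 < A\<close> by (intro mult_left_le) auto
  then have "C < f' x0" using start by linarith
  show ?thesis
  proof (rule large[OF t])
    show "0 \<le> f' r" if r: "x0 \<le> r" "r \<le> t" for r
    proof (rule ccontr)
      assume "\<not> 0 \<le> f' r"
      moreover have "continuous_on {x0..r} f'"
        by (intro continuous_at_imp_continuous_on ballI DERIV_isCont[OF deriv'])
      ultimately obtain t1 where t1: "x0 < t1" "t1 \<le> r" "f' t1 = 0"
        and before: "\<And>s. x0 \<le> s \<Longrightarrow> s < t1 \<Longrightarrow> 0 < f' s"
        using first_root_after[of x0 r f'] r \<open>C < f' x0\<close> \<open>0 \<le> C\<close> by auto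
      have "0 \<le> f' s" if "x0 \<le> s" "s \<le> t1" for s
        using before[of s] t1 that by (cases "s = t1") auto
      then have "C < f' t1" using t r t1 by (intro large) auto
      then show False using t1 \<open>0 \<le> C\<close> by simp
    qed
  qed
qed

lemma deriv_le_of_second_deriv_bound:
  fixes f f' f'' :: "real \<Rightarrow> real" and A B K x0 :: real
  assumes deriv: "\<And>x. (f has_real_derivative f' x) (at x)"
    and deriv': "\<And>x. (f' has_real_derivative f'' x) (at x)"
    and f_bound: "\<And>x. \<bar>f x\<bar> \<le> K" and f''_bound: "\<And>x. \<bar>f'' x\<bar> \<le> A * \<bar>f' x\<bar> + B"
    and "0 < A" "0 \<le> B"
  shows "f' x0 \<le> (2 * K + B / A) * exp A"
proof (rule ccontr)
  assume "\<not> ?thesis"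
  then have "2 * K + B / A < f' x0 * exp (- A)" by (simp add: exp_minus field_simps)
  moreover have "0 \<le> B / A * exp (- A)" using assms by simp
  ultimately have start: "2 * K + B / A < (f' x0 + B / A) * exp (- A)"
    by (simp add: distrib_right)
  have "0 \<le> K" using f_bound[of 0] by linarith
  obtain \<xi> where \<xi>: "x0 < \<xi>" "\<xi> < x0 + 1" "f (x0 + 1) - f x0 = f' \<xi>"
    using MVT2[of x0 "x0 + 1" f f'] deriv by auto
  moreover have "2 * K < f' \<xi>"
    using \<xi> assms \<open>0 \<le> K\<close> by (intro deriv_stays_large[OF deriv' f''_bound _ _ _ start]) auto
  moreover have "f (x0 + 1) - f x0 \<le> 2 * K"
    using f_bound[of x0] f_bound[of "x0 + 1"] by (simp add: abs_le_iff)
  ultimately show False by linarith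
qed

lemma abs_deriv_le_of_second_deriv_bound:
  fixes f f' f'' :: "real \<Rightarrow> real" and A B K x :: real
  assumes deriv: "\<And>x. (f has_real_derivative f' x) (at x)"
    and deriv': "\<And>x. (f' has_real_derivative f'' x) (at x)"
    and "\<And>x. \<bar>f x\<bar> \<le> K" and "\<And>x. \<bar>f'' x\<bar> \<le> A * \<bar>f' x\<bar> + B"
    and "0 < A" "0 \<le> B"
  shows "\<bar>f' x\<bar> \<le> (2 * K + B / A) * exp A"
proof -
  have "f' x \<le> (2 * K + B / A) * exp A"
    by (rule deriv_le_of_second_deriv_bound[OF deriv deriv']) (use assms in auto)
  moreover have "- f' x \<le> (2 * K + B / A) * exp A"
    by (rule deriv_le_of_second_deriv_bound[of "\<lambda>x. - f x" _ "\<lambda>x. - f'' x"])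
       (use assms in \<open>auto intro: DERIV_minus\<close>)
  ultimately show ?thesis by linarith
qed

lemma unbounded_if_deriv_pos_and_second_deriv_ge:
  fixes w w' w'' :: "real \<Rightarrow> real" and a \<delta> G K :: real
  assumes deriv: "\<And>t. a \<le> t \<Longrightarrow> (w has_real_derivative w' t) (at t)"
    and deriv': "\<And>t. a \<le> t \<Longrightarrow> (w' has_real_derivative w'' t) (at t)"
    and ineq: "\<And>t. a \<le> t \<Longrightarrow> \<delta> - G * w' t \<le> w'' t"
    and "0 < w' a" "0 < G" "0 < \<delta>"
  obtains t where "a \<le> t" "K < \<bar>w t\<bar>"
proof (rule deriv_ge_pos_imp_unbounded[OF deriv])
  show "min (w' a) (\<delta> / G) \<le> w' t" if "a \<le> t" for t
  proof -
    have decay: "(w' a - \<delta> / G) * exp (- G * (t - a)) \<le> w' t - \<delta> / G"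
    proof (rule gronwall_lower_bound[OF that])
      show "((\<lambda>s. w' s - \<delta> / G) has_real_derivative w'' s) (at s)" if "a \<le> s" for s
        using that by (auto intro!: derivative_eq_intros deriv')
      show "- G * (w' s - \<delta> / G) \<le> w'' s" if "a \<le> s" for s
        using ineq[OF that] \<open>0 < G\<close> by (simp add: algebra_simps)
    qed
    consider "0 \<le> w' a - \<delta> / G" | "w' a - \<delta> / G < 0" by linarith
    then show ?thesis
    proof cases
      case 1
      then have "0 \<le> (w' a - \<delta> / G) * exp (- G * (t - a))" by simp
      with decay show ?thesis by (simp add: min_le_iff_disj)
    next
      case 2
      have "exp (- G * (t - a)) \<le> 1" using that \<open>0 < G\<close> by simp
      with 2 have "(w' a - \<delta> / G) * 1 \<le> (w' a - \<delta> / G) * exp (- G * (t - a))"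
        by (intro mult_left_mono_neg) auto
      with decay show ?thesis by (simp add: min_le_iff_disj)
    qed
  qed
qed (use assms in auto)

lemma unbounded_if_deriv_neg_and_second_deriv_ge:
  fixes w w' w'' :: "real \<Rightarrow> real" and a \<delta> G K :: real
  assumes deriv: "\<And>t. a \<le> t \<Longrightarrow> (w has_real_derivative w' t) (at t)"
    and deriv': "\<And>t. a \<le> t \<Longrightarrow> (w' has_real_derivative w'' t) (at t)"
    and ineq: "\<And>t. a \<le> t \<Longrightarrow> \<delta> + G * w' t \<le> w'' t"
    and neg: "\<And>t. a \<le> t \<Longrightarrow> w' t < 0" and "0 < G" "0 < \<delta>"
  obtains t where "a \<le> t" "K < \<bar>w t\<bar>"
proof (cases "\<exists>\<xi>\<ge>a. 0 < w' \<xi> + \<delta> / G")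
  case True
  \<comment> \<open>then \<open>w' + \<delta> / G\<close> grows exponentially and \<open>w'\<close> becomes positive\<close>
  then obtain \<xi> where \<xi>: "a \<le> \<xi>" "0 < w' \<xi> + \<delta> / G" by blast
  define c where "c = w' \<xi> + \<delta> / G"
  define t where "t = \<xi> + \<delta> / (c * G\<^sup>2)"
  have "0 < c" using \<xi> by (simp add: c_def)
  have "\<xi> \<le> t" using \<open>0 < c\<close> \<open>0 < G\<close> \<open>0 < \<delta>\<close> by (simp add: t_def)
  have "c * exp (G * (t - \<xi>)) \<le> w' t + \<delta> / G"
    unfolding c_def
  proof (rule gronwall_lower_bound[OF \<open>\<xi> \<le> t\<close>])
    show "((\<lambda>s. w' s + \<delta> / G) has_real_derivative w'' s) (at s)" if "\<xi> \<le> s" for s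
      using that \<xi> by (auto intro!: derivative_eq_intros deriv')
    show "G * (w' s + \<delta> / G) \<le> w'' s" if "\<xi> \<le> s" for s
      using ineq[of s] that \<xi> \<open>0 < G\<close> by (simp add: algebra_simps)
  qed
  moreover have "c * (1 + G * (t - \<xi>)) \<le> c * exp (G * (t - \<xi>))"
    using \<open>0 < c\<close> by (intro mult_left_mono exp_ge_add_one_self) simp_all
  moreover have "c * (1 + G * (t - \<xi>)) = c + \<delta> / G"
    using \<open>0 < c\<close> \<open>0 < G\<close> by (simp add: t_def field_simps power2_eq_square)
  ultimately have "0 < w' t" using \<open>0 < c\<close> by linarith
  then show thesis using neg[of t] \<xi> \<open>\<xi> \<le> t\<close> by simp
next
  case False
  obtain t where "a \<le> t" "K < \<bar>- w t\<bar>"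
  proof (rule deriv_ge_pos_imp_unbounded[of a "\<lambda>t. - w t" "\<lambda>t. - w' t" "\<delta> / G"])
    show "((\<lambda>t. - w t) has_real_derivative - w' t) (at t)" if "a \<le> t" for t
      using deriv[OF that] by (rule DERIV_minus)
    show "\<delta> / G \<le> - w' t" if "a \<le> t" for t
      using False that by force
  qed (use \<open>0 < G\<close> \<open>0 < \<delta>\<close> in auto)
  then show thesis using that by simp
qed

section \<open>The stationary logistic equation\<close>

locale logistic_halfline =
  fixes w w' w'' g k :: "real \<Rightarrow> real" and R G \<kappa> K :: real
  assumes deriv: "\<And>x. R \<le> x \<Longrightarrow> (w has_real_derivative w' x) (at x)"
    and deriv': "\<And>x. R \<le> x \<Longrightarrow> (w' has_real_derivative w'' x) (at x)"
    and ode: "\<And>x. R \<le> x \<Longrightarrow> w'' x + g x * w' x + k x * w x * (1 - w x) = 0"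
    and drift_bound: "\<And>x. R \<le> x \<Longrightarrow> \<bar>g x\<bar> \<le> G" and G_pos: "0 < G"
    and reaction_lower: "\<And>x. R \<le> x \<Longrightarrow> \<kappa> \<le> k x" and \<kappa>_pos: "0 < \<kappa>"
    and w_bound: "\<And>x. R \<le> x \<Longrightarrow> \<bar>w x\<bar> \<le> K"
begin

lemma second_deriv_eq: "R \<le> x \<Longrightarrow> w'' x = k x * (w x * (w x - 1)) - g x * w' x"
  using ode[of x] by (simp add: algebra_simps)

lemma reaction_ge:
  assumes "R \<le> x" "1 \<le> L" "L \<le> w x"
  shows "\<kappa> * (L * (L - 1)) \<le> k x * (w x * (w x - 1))"
proof (rule mult_mono)
  show "L * (L - 1) \<le> w x * (w x - 1)" using assms by (intro mult_mono) auto
qed (use assms reaction_lower[OF assms(1)] \<kappa>_pos in auto)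

lemma second_deriv_pos_at_critical:
  assumes "R \<le> x" "1 < w x" "w' x = 0"
  shows "0 < w'' x"
proof -
  have "0 < k x" using reaction_lower[OF assms(1)] \<kappa>_pos by linarith
  with assms show ?thesis by (simp add: second_deriv_eq)
qed

lemma nondecreasing_if_deriv_nonneg:
  assumes "R \<le> a" "a \<le> b" "\<And>s. a \<le> s \<Longrightarrow> s \<le> b \<Longrightarrow> 0 \<le> w' s"
  shows "w a \<le> w b"
proof (rule DERIV_nonneg_imp_nondecreasing[OF assms(2)])
  fix s assume "a \<le> s" "s \<le> b"
  then show "\<exists>y. (w has_real_derivative y) (at s) \<and> 0 \<le> y"
    using deriv[of s] assms(1) assms(3)[of s] by auto
qed

lemma deriv_stays_pos_above_one:
  assumes "R \<le> a" "1 < w a" "0 < w' a" "a \<le> t"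
  shows "0 < w' t"
proof (rule ccontr)
  assume "\<not> 0 < w' t"
  then have "w' t \<le> 0" by simp
  moreover have "continuous_on {a..t} w'"
    using assms(1) by (intro continuous_at_imp_continuous_on ballI DERIV_isCont[OF deriv']) auto
  ultimately obtain t1 where t1: "a < t1" "t1 \<le> t" "w' t1 = 0"
    and before: "\<And>s. a \<le> s \<Longrightarrow> s < t1 \<Longrightarrow> 0 < w' s"
    using first_root_after[of a t w'] assms by blast
  have "w a \<le> w t1"
    using assms(1) t1 before by (intro nondecreasing_if_deriv_nonneg) (auto simp: le_less)
  then have "0 < w'' t1" using assms t1 by (intro second_deriv_pos_at_critical) auto
  then obtain d where "0 < d" and dec: "\<And>h. 0 < h \<Longrightarrow> h < d \<Longrightarrow> w' (t1 - h) < w' t1"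
    using DERIV_pos_inc_left[OF deriv'[of t1]] assms t1 by auto
  define h where "h = min (d / 2) (t1 - a)"
  have "0 < h" "h < d" "a \<le> t1 - h" using \<open>0 < d\<close> t1 by (auto simp: h_def)
  then have "w' (t1 - h) < 0" "0 < w' (t1 - h)"
    using dec[of h] before[of "t1 - h"] t1 by simp_all
  then show False by simp
qed

lemma not_increasing_above_one:
  assumes "R \<le> a" "1 < w a"
  shows "\<not> 0 < w' a"
proof
  assume "0 < w' a"
  note pos = deriv_stays_pos_above_one[OF assms \<open>0 < w' a\<close>]
  have "0 < \<kappa> * (w a * (w a - 1))" using assms \<kappa>_pos by simp
  obtain t where "a \<le> t" "K < \<bar>w t\<bar>"
  proof (rule unbounded_if_deriv_pos_and_second_deriv_ge[of a w w' w'' _ G K])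
    fix t assume "a \<le> t"
    then have "R \<le> t" using assms by simp
    have "w a \<le> w t"
      using assms \<open>a \<le> t\<close> pos by (intro nondecreasing_if_deriv_nonneg) (auto intro: less_imp_le)
    moreover have "g t * w' t \<le> G * w' t"
      using drift_bound[OF \<open>R \<le> t\<close>] pos[OF \<open>a \<le> t\<close>] by (intro mult_right_mono) auto
    ultimately show "\<kappa> * (w a * (w a - 1)) - G * w' t \<le> w'' t"
      using reaction_ge[of t "w a"] second_deriv_eq[OF \<open>R \<le> t\<close>] assms \<open>R \<le> t\<close> by simp
  next
    show "(w has_real_derivative w' t) (at t)" "(w' has_real_derivative w'' t) (at t)"
      if "a \<le> t" for t
      using deriv[of t] deriv'[of t] assms that by simp_all
  qed (use \<open>0 < w' a\<close> G_pos \<open>0 < \<kappa> * (w a * (w a - 1))\<close> in auto)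
  moreover have "\<bar>w t\<bar> \<le> K" if "a \<le> t" for t using w_bound assms that by simp
  ultimately show False by (meson not_le)
qed

lemma deriv_neg_above_one:
  assumes "R \<le> x" "1 < w x"
  shows "w' x < 0"
proof (rule ccontr)
  assume "\<not> w' x < 0"
  with not_increasing_above_one[OF assms] have "w' x = 0" by simp
  with assms have "0 < w'' x" by (rule second_deriv_pos_at_critical)
  then obtain d where "0 < d" and inc: "\<And>h. 0 < h \<Longrightarrow> h < d \<Longrightarrow> w' x < w' (x + h)"
    using DERIV_pos_inc_right[OF deriv'[OF assms(1)]] by blast
  define h where "h = d / 2"
  have "0 < h" "h < d" using \<open>0 < d\<close> by (auto simp: h_def)
  have "0 \<le> w' s" if "x \<le> s" "s \<le> x + h" for s
    using inc[of "s - x"] \<open>w' x = 0\<close> \<open>h < d\<close> that by (cases "s = x") auto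
  then have "w x \<le> w (x + h)"
    using assms \<open>0 < h\<close> by (intro nondecreasing_if_deriv_nonneg) auto
  moreover have "0 < w' (x + h)" using inc[OF \<open>0 < h\<close> \<open>h < d\<close>] \<open>w' x = 0\<close> by simp
  ultimately show False
    using not_increasing_above_one[of "x + h"] assms \<open>0 < h\<close> by auto
qed

lemma nonincreasing_above_one:
  assumes "R \<le> x" "x \<le> y" "1 < w y"
  shows "w y \<le> w x"
proof (rule ccontr)
  assume "\<not> w y \<le> w x"
  have "continuous_on {x..y} w"
    using assms(1) by (intro continuous_at_imp_continuous_on ballI DERIV_isCont[OF deriv]) auto
  then obtain p where p: "x \<le> p" "p \<le> y" and max: "\<And>z. x \<le> z \<Longrightarrow> z \<le> y \<Longrightarrow> w z \<le> w p"
    using continuous_attains_sup[of "{x..y}" w] assms(2) by auto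
  have "w y \<le> w p" using max assms(2) by simp
  then have "x < p" "1 < w p" using p \<open>\<not> w y \<le> w x\<close> assms by (auto simp: le_less)
  then have "w' p < 0" using assms(1) by (intro deriv_neg_above_one) auto
  then obtain d where "0 < d" and dec: "\<And>h. 0 < h \<Longrightarrow> h < d \<Longrightarrow> w p < w (p - h)"
    using DERIV_neg_dec_left[OF deriv[of p]] assms(1) \<open>x < p\<close> by auto
  define h where "h = min (d / 2) (p - x)"
  have "0 < h" "h < d" "x \<le> p - h" using \<open>0 < d\<close> \<open>x < p\<close> by (auto simp: h_def)
  then have "w p < w (p - h)" "w (p - h) \<le> w p" using dec[of h] max[of "p - h"] p by simp_all
  then show False by simp
qed

lemma eventually_le:
  assumes "0 < \<epsilon>"
  shows "eventually (\<lambda>x. w x \<le> 1 + \<epsilon>) at_top"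
proof (rule ccontr)
  assume "\<not> ?thesis"
  then have frequent: "\<exists>x\<ge>N. 1 + \<epsilon> < w x" for N
    by (simp add: eventually_at_top_linorder not_le)
  obtain a where a: "R \<le> a" "1 + \<epsilon> < w a" using frequent[of R] by blast
  \<comment> \<open>once above \<open>1 + \<epsilon>\<close>, \<open>w\<close> can never come back below it\<close>
  have above: "1 + \<epsilon> < w t" if "a \<le> t" for t
  proof -
    obtain y where "t \<le> y" "1 + \<epsilon> < w y" using frequent[of t] by blast
    then show ?thesis
      using nonincreasing_above_one[of t y] a that \<open>0 < \<epsilon>\<close> by force
  qed
  have "0 < \<kappa> * ((1 + \<epsilon>) * \<epsilon>)" using \<kappa>_pos \<open>0 < \<epsilon>\<close> by simp
  obtain t where "a \<le> t" "K < \<bar>w t\<bar>"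
  proof (rule unbounded_if_deriv_neg_and_second_deriv_ge[of a w w' w'' _ G K])
    fix t assume "a \<le> t"
    then have "R \<le> t" using a by simp
    have neg: "w' t < 0"
      using above[OF \<open>a \<le> t\<close>] \<open>0 < \<epsilon>\<close> \<open>R \<le> t\<close> by (intro deriv_neg_above_one) auto
    show "w' t < 0" by (fact neg)
    have "g t * w' t \<le> \<bar>g t\<bar> * \<bar>w' t\<bar>" by (simp flip: abs_mult)
    also have "\<dots> \<le> G * (- w' t)"
      using drift_bound[OF \<open>R \<le> t\<close>] neg by (simp add: mult_right_mono)
    finally show "\<kappa> * ((1 + \<epsilon>) * \<epsilon>) + G * w' t \<le> w'' t"
      using reaction_ge[OF \<open>R \<le> t\<close>, of "1 + \<epsilon>"] above[OF \<open>a \<le> t\<close>] \<open>0 < \<epsilon>\<close>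
        second_deriv_eq[OF \<open>R \<le> t\<close>] by simp
  next
    show "(w has_real_derivative w' t) (at t)" "(w' has_real_derivative w'' t) (at t)"
      if "a \<le> t" for t
      using deriv[of t] deriv'[of t] a that by simp_all
  qed (use G_pos \<open>0 < \<kappa> * ((1 + \<epsilon>) * \<epsilon>)\<close> in auto)
  moreover have "\<bar>w t\<bar> \<le> K" if "a \<le> t" for t using w_bound a that by simp
  ultimately show False by (meson not_le)
qed

end

definition logistic_sol :: "(real \<Rightarrow> real) \<Rightarrow> (real \<Rightarrow> real) \<Rightarrow> real \<Rightarrow> (real \<Rightarrow> real) \<Rightarrow> bool" where
  "logistic_sol a q \<beta> Z \<longleftrightarrow>
     (\<exists>Z' Z''. \<forall>x. (Z has_real_derivative Z' x) (at x) \<and> (Z' has_real_derivative Z'' x) (at x) \<and>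
        Z'' x + a x * Z' x + (q x - \<beta> * Z x) * Z x = 0)"

lemma logistic_sol_deriv_bounded:
  fixes a q Z :: "real \<Rightarrow> real" and A Q \<beta> K :: real
  assumes sol: "logistic_sol a q \<beta> Z"
    and a_bound: "\<And>x. \<bar>a x\<bar> \<le> A" and q_bound: "\<And>x. \<bar>q x\<bar> \<le> Q" and "0 \<le> \<beta>"
    and Z_bound: "\<And>x. 0 \<le> Z x" "\<And>x. Z x \<le> K"
  obtains Z' Z'' C where "\<And>x. (Z has_real_derivative Z' x) (at x)"
    "\<And>x. (Z' has_real_derivative Z'' x) (at x)"
    "\<And>x. Z'' x + a x * Z' x + (q x - \<beta> * Z x) * Z x = 0" "\<And>x. \<bar>Z' x\<bar> \<le> C"
proof -
  obtain Z' Z'' where deriv: "\<And>x. (Z has_real_derivative Z' x) (at x)"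
    and deriv': "\<And>x. (Z' has_real_derivative Z'' x) (at x)"
    and ode: "\<And>x. Z'' x + a x * Z' x + (q x - \<beta> * Z x) * Z x = 0"
    using sol unfolding logistic_sol_def by blast
  define B where "B = (Q + \<beta> * K) * K"
  have "0 \<le> A" "0 \<le> K" using a_bound[of 0] Z_bound[of 0] by linarith+
  have "\<bar>Z'' x\<bar> \<le> (A + 1) * \<bar>Z' x\<bar> + B" for x
  proof -
    have "\<bar>a x * Z' x\<bar> \<le> A * \<bar>Z' x\<bar>"
      unfolding abs_mult using a_bound[of x] by (simp add: mult_right_mono)
    moreover have "\<bar>q x - \<beta> * Z x\<bar> \<le> Q + \<beta> * K"
      using q_bound[of x] mult_left_mono[OF Z_bound(2)[of x] \<open>0 \<le> \<beta>\<close>]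
        mult_nonneg_nonneg[OF \<open>0 \<le> \<beta>\<close> Z_bound(1)[of x]]
      by (simp only: abs_le_iff) (intro conjI; linarith)
    then have "\<bar>(q x - \<beta> * Z x) * Z x\<bar> \<le> B"
      unfolding abs_mult B_def using Z_bound[of x] by (intro mult_mono) auto
    moreover have "Z'' x = - (a x * Z' x) - (q x - \<beta> * Z x) * Z x" using ode[of x] by simp
    then have "\<bar>Z'' x\<bar> \<le> \<bar>a x * Z' x\<bar> + \<bar>(q x - \<beta> * Z x) * Z x\<bar>"
      by (metis abs_minus_cancel abs_triangle_ineq4)
    ultimately show ?thesis using abs_ge_zero[of "Z' x"] by (simp add: algebra_simps)
  qed
  moreover have "\<bar>Z x\<bar> \<le> K" for x using Z_bound[of x] by simp
  moreover have "0 \<le> B" using q_bound[of 0] \<open>0 \<le> \<beta>\<close> \<open>0 \<le> K\<close> by (simp add: B_def)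
  ultimately have "\<bar>Z' x\<bar> \<le> (2 * K + B / (A + 1)) * exp (A + 1)" for x
    using \<open>0 \<le> A\<close> by (intro abs_deriv_le_of_second_deriv_bound[OF deriv deriv']) auto
  with deriv deriv' ode show thesis by (rule that)
qed

lemma quotient_logistic_halfline:
  fixes V V' V'' W W' W'' a q :: "real \<Rightarrow> real" and \<beta> A C K m R :: real
  assumes dV: "\<And>x. (V has_real_derivative V' x) (at x)"
    and dV': "\<And>x. (V' has_real_derivative V'' x) (at x)"
    and dW: "\<And>x. (W has_real_derivative W' x) (at x)"
    and dW': "\<And>x. (W' has_real_derivative W'' x) (at x)"
    and ode_V: "\<And>x. V'' x + a x * V' x + (q x - \<beta> * V x) * V x = 0"
    and ode_W: "\<And>x. W'' x + a x * W' x + (q x - \<beta> * W x) * W x = 0"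
    and a_bound: "\<And>x. \<bar>a x\<bar> \<le> A" and V'_bound: "\<And>x. \<bar>V' x\<bar> \<le> C" and "0 < \<beta>"
    and V_ge: "\<And>x. R \<le> x \<Longrightarrow> m \<le> V x" and "0 < m"
    and W_bound: "\<And>x. 0 \<le> W x" "\<And>x. W x \<le> K"
  obtains w' w'' where "logistic_halfline (\<lambda>x. W x / V x) w' w''
    (\<lambda>x. 2 * V' x / V x + a x) (\<lambda>x. \<beta> * V x) R (2 * C / m + A + 1) (\<beta> * m) (K / m)"
proof -
  have "0 \<le> A" "0 \<le> C" "0 \<le> K" using a_bound[of 0] V'_bound[of 0] W_bound[of 0] by linarith+
  define w' where "w' x = (W' x * V x - W x * V' x) / (V x * V x)" for x
  \<comment> \<open>\<open>w''\<close> is the unsimplified output of the quotient rule applied to \<open>w'\<close>\<close>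
  define w'' where "w'' x = ((W'' x * V x + V' x * W' x - (W' x * V' x + V'' x * W x)) * (V x * V x)
      - (W' x * V x - W x * V' x) * (V' x * V x + V' x * V x)) / ((V x * V x) * (V x * V x))" for x
  show thesis
  proof (rule that[of w' w''], unfold_locales)
    fix x assume "R \<le> x"
    have V_x: "0 < V x" "m \<le> V x" using V_ge[OF \<open>R \<le> x\<close>] \<open>0 < m\<close> by auto
    show "((\<lambda>x. W x / V x) has_real_derivative w' x) (at x)"
      unfolding w'_def using V_x by (intro DERIV_divide dW dV) simp
    show "(w' has_real_derivative w'' x) (at x)"
      unfolding w'_def[abs_def] w''_def using V_x
      by (intro DERIV_divide DERIV_diff DERIV_mult dW dV dW' dV') simp
    have V'': "V'' x = - a x * V' x - (q x - \<beta> * V x) * V x"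
      and W'': "W'' x = - a x * W' x - (q x - \<beta> * W x) * W x"
      using ode_V[of x] ode_W[of x] by (simp_all add: algebra_simps)
    show "w'' x + (2 * V' x / V x + a x) * w' x + \<beta> * V x * (W x / V x) * (1 - W x / V x) = 0"
      unfolding w''_def w'_def V'' W'' using V_x by (simp add: field_simps)
    have "\<bar>V' x / V x\<bar> \<le> C / m"
      using V'_bound[of x] V_x \<open>0 \<le> C\<close> \<open>0 < m\<close> by (simp add: abs_div frac_le)
    moreover have "\<bar>2 * V' x / V x + a x\<bar> \<le> 2 * \<bar>V' x / V x\<bar> + \<bar>a x\<bar>"
      using abs_triangle_ineq[of "2 * (V' x / V x)" "a x"] by (simp add: abs_mult)
    ultimately show "\<bar>2 * V' x / V x + a x\<bar> \<le> 2 * C / m + A + 1" using a_bound[of x] by simp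
    show "\<beta> * m \<le> \<beta> * V x" using V_x \<open>0 < \<beta>\<close> by simp
    show "\<bar>W x / V x\<bar> \<le> K / m"
      using W_bound[of x] V_x \<open>0 < m\<close> \<open>0 \<le> K\<close> by (simp add: frac_le)
  next
    show "0 < 2 * C / m + A + 1"
      using \<open>0 \<le> A\<close> divide_nonneg_pos[OF \<open>0 \<le> C\<close> \<open>0 < m\<close>] by linarith
  qed (use \<open>0 < m\<close> \<open>0 < \<beta>\<close> in auto)
qed

lemma logistic_sol_ratio_eventually_le:
  fixes a q V W :: "real \<Rightarrow> real" and A Q \<beta> K m \<epsilon> :: real
  assumes V: "logistic_sol a q \<beta> V" and W: "logistic_sol a q \<beta> W"
    and a_bound: "\<And>x. \<bar>a x\<bar> \<le> A" and q_bound: "\<And>x. \<bar>q x\<bar> \<le> Q" and "0 < \<beta>"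
    and V_bound: "\<And>x. 0 \<le> V x" "\<And>x. V x \<le> K"
    and W_bound: "\<And>x. 0 \<le> W x" "\<And>x. W x \<le> K"
    and V_lower: "eventually (\<lambda>x. m \<le> V x) at_top" and "0 < m" and "0 < \<epsilon>"
  shows "eventually (\<lambda>x. W x / V x \<le> 1 + \<epsilon>) at_top"
proof -
  obtain V' V'' C where dV: "\<And>x. (V has_real_derivative V' x) (at x)"
    and dV': "\<And>x. (V' has_real_derivative V'' x) (at x)"
    and ode_V: "\<And>x. V'' x + a x * V' x + (q x - \<beta> * V x) * V x = 0"
    and V'_bound: "\<And>x. \<bar>V' x\<bar> \<le> C"
    using logistic_sol_deriv_bounded[OF V a_bound q_bound less_imp_le[OF \<open>0 < \<beta>\<close>] V_bound]
    by blast
  obtain W' W'' where dW: "\<And>x. (W has_real_derivative W' x) (at x)"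
    and dW': "\<And>x. (W' has_real_derivative W'' x) (at x)"
    and ode_W: "\<And>x. W'' x + a x * W' x + (q x - \<beta> * W x) * W x = 0"
    using W unfolding logistic_sol_def by blast
  obtain R where "\<And>x. R \<le> x \<Longrightarrow> m \<le> V x"
    using V_lower by (auto simp: eventually_at_top_linorder)
  then obtain w' w'' where "logistic_halfline (\<lambda>x. W x / V x) w' w''
      (\<lambda>x. 2 * V' x / V x + a x) (\<lambda>x. \<beta> * V x) R (2 * C / m + A + 1) (\<beta> * m) (K / m)"
    using quotient_logistic_halfline[OF dV dV' dW dW' ode_V ode_W a_bound V'_bound \<open>0 < \<beta>\<close>
        _ \<open>0 < m\<close> W_bound] by blast
  then show ?thesis by (rule logistic_halfline.eventually_le[OF _ \<open>0 < \<epsilon>\<close>])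
qed

lemma tendsto_one_if_ratios_eventually_le:
  fixes f g :: "real \<Rightarrow> real"
  assumes fg: "\<And>\<epsilon>. 0 < \<epsilon> \<Longrightarrow> eventually (\<lambda>x. f x / g x \<le> 1 + \<epsilon>) F"
    and gf: "\<And>\<epsilon>. 0 < \<epsilon> \<Longrightarrow> eventually (\<lambda>x. g x / f x \<le> 1 + \<epsilon>) F"
    and pos: "eventually (\<lambda>x. 0 < f x \<and> 0 < g x) F"
  shows "((\<lambda>x. f x / g x) \<longlongrightarrow> 1) F"
proof (rule tendstoI)
  fix e :: real assume "0 < e"
  then have "0 < e / 2" by simp
  from fg[OF this] gf[OF this] pos show "eventually (\<lambda>x. dist (f x / g x) 1 < e) F"
  proof eventually_elim
    case (elim x)
    \<comment> \<open>\<open>g / f \<le> 1 + \<epsilon>\<close> gives \<open>f / g \<ge> 1 / (1 + \<epsilon>) \<ge> 1 - \<epsilon>\<close>\<close>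
    have lower: "1 \<le> (1 + e / 2) * (f x / g x)"
      using elim by (simp add: field_simps)
    have "1 - e / 2 \<le> f x / g x"
    proof (rule ccontr)
      assume "\<not> 1 - e / 2 \<le> f x / g x"
      then have "(1 + e / 2) * (f x / g x) < (1 + e / 2) * (1 - e / 2)"
        using \<open>0 < e\<close> by (intro mult_strict_left_mono) auto
      also have "\<dots> \<le> 1" by (simp add: algebra_simps)
      finally show False using lower by simp
    qed
    with elim \<open>0 < e\<close> show ?case by (simp add: dist_real_def abs_le_iff)
  qed
qed

lemma logistic_sols_ratio_tendsto_one:
  fixes a q V W :: "real \<Rightarrow> real" and A Q \<beta> K m :: real
  assumes V: "logistic_sol a q \<beta> V" and W: "logistic_sol a q \<beta> W"
    and a_bound: "\<And>x. \<bar>a x\<bar> \<le> A" and q_bound: "\<And>x. \<bar>q x\<bar> \<le> Q" and "0 < \<beta>"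
    and "\<And>x. 0 \<le> V x" "\<And>x. V x \<le> K" "\<And>x. 0 \<le> W x" "\<And>x. W x \<le> K"
    and V_lower: "eventually (\<lambda>x. m \<le> V x) at_top"
    and W_lower: "eventually (\<lambda>x. m \<le> W x) at_top" and "0 < m"
  shows "((\<lambda>x. W x / V x) \<longlongrightarrow> 1) at_top"
proof (rule tendsto_one_if_ratios_eventually_le)
  show "eventually (\<lambda>x. W x / V x \<le> 1 + \<epsilon>) at_top" if "0 < \<epsilon>" for \<epsilon>
    using logistic_sol_ratio_eventually_le[OF V W a_bound q_bound] assms that by blast
  show "eventually (\<lambda>x. V x / W x \<le> 1 + \<epsilon>) at_top" if "0 < \<epsilon>" for \<epsilon>
    using logistic_sol_ratio_eventually_le[OF W V a_bound q_bound] assms that by blast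
  show "eventually (\<lambda>x. 0 < W x \<and> 0 < V x) at_top"
    using V_lower W_lower by eventually_elim (use \<open>0 < m\<close> in auto)
qed

section \<open>The nonlocal term\<close>

lemma has_real_derivative_interval_integral_upper:
  fixes f :: "real \<Rightarrow> real"
  assumes "continuous_on UNIV f"
  shows "((\<lambda>t. LBINT y=ereal x..ereal t. f y) has_real_derivative f x) (at x)"
proof -
  have "continuous_on {x - 1..x + 1} f" using assms by (rule continuous_on_subset) simp
  then have "((\<lambda>t. LBINT y=ereal x..ereal t. f y) has_vector_derivative f x) (at x within {x - 1..x + 1})"
    using interval_integral_FTC2[of "x - 1" x "x + 1" f x] by simp
  then have "((\<lambda>t. LBINT y=ereal x..ereal t. f y) has_vector_derivative f x) (at x within {x - 1<..<x + 1})"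
    by (rule has_vector_derivative_within_subset) auto
  then have "((\<lambda>t. LBINT y=ereal x..ereal t. f y) has_vector_derivative f x) (at x)"
    by (rule has_vector_derivative_within_open[THEN iffD1, rotated 2]) auto
  then show ?thesis by (simp add: has_real_derivative_iff_has_vector_derivative)
qed

lemma has_real_derivative_integral_from_minf:
  fixes f :: "real \<Rightarrow> real"
  assumes "continuous_on UNIV f" "\<And>x. set_integrable lborel (einterval (-\<infinity>) (ereal x)) f"
  shows "((\<lambda>x. LBINT y=-\<infinity>..ereal x. f y) has_real_derivative f x) (at x)"
proof -
  have "(\<lambda>t. LBINT y=-\<infinity>..ereal t. f y) = (\<lambda>t. (LBINT y=-\<infinity>..ereal x. f y) + (LBINT y=ereal x..ereal t. f y))"
  proof (rule ext, rule interval_integral_sum[symmetric])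
    fix t
    show "interval_lebesgue_integrable lborel (min (-\<infinity>) (min (ereal x) (ereal t)))
        (max (-\<infinity>) (max (ereal x) (ereal t))) f"
      using assms(2)[of "max x t"]
      by (cases "x \<le> t") (simp_all add: interval_lebesgue_integrable_def max_def)
  qed
  moreover have "((\<lambda>t. (LBINT y=-\<infinity>..ereal x. f y) + (LBINT y=ereal x..ereal t. f y))
      has_real_derivative f x) (at x)"
    using DERIV_add[OF DERIV_const has_real_derivative_interval_integral_upper[OF assms(1)]] by simp
  ultimately show ?thesis by simp
qed

lemma has_real_derivative_integral_to_inf:
  fixes f :: "real \<Rightarrow> real"
  assumes "continuous_on UNIV f" "\<And>x. set_integrable lborel (einterval (ereal x) \<infinity>) f"
  shows "((\<lambda>x. LBINT y=ereal x..\<infinity>. f y) has_real_derivative - f x) (at x)"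
proof -
  have "(\<lambda>t. LBINT y=ereal t..\<infinity>. f y) = (\<lambda>t. (LBINT y=ereal x..\<infinity>. f y) - (LBINT y=ereal x..ereal t. f y))"
  proof (rule ext)
    fix t
    have "interval_lebesgue_integrable lborel (min (ereal t) (min (ereal x) \<infinity>))
        (max (ereal t) (max (ereal x) \<infinity>)) f"
      using assms(2)[of "min x t"]
      by (cases "x \<le> t") (simp_all add: interval_lebesgue_integrable_def min_def)
    from interval_integral_sum[OF this]
    show "(LBINT y=ereal t..\<infinity>. f y) = (LBINT y=ereal x..\<infinity>. f y) - (LBINT y=ereal x..ereal t. f y)"
      using interval_integral_endpoints_reverse[of "ereal t" "ereal x" f] by linarith
  qed
  moreover have "((\<lambda>t. (LBINT y=ereal x..\<infinity>. f y) - (LBINT y=ereal x..ereal t. f y))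
      has_real_derivative - f x) (at x)"
    using DERIV_diff[OF DERIV_const has_real_derivative_interval_integral_upper[OF assms(1)]] by simp
  ultimately show ?thesis by simp
qed

lemma interval_integral_exp_below:
  fixes s x :: real
  assumes "0 < s"
  shows "set_integrable lborel (einterval (-\<infinity>) (ereal x)) (\<lambda>y. exp (s * y))"
    and "(LBINT y=-\<infinity>..ereal x. exp (s * y)) = exp (s * x) / s"
proof -
  have "filterlim (\<lambda>y. s * y) at_bot at_bot"
    using \<open>0 < s\<close> by (intro filterlim_tendsto_pos_mult_at_bot[OF tendsto_const] filterlim_ident)
  then have "((\<lambda>y. exp (s * y)) \<longlongrightarrow> 0) at_bot" by (rule filterlim_compose[OF exp_at_bot])
  then have lim_bot: "(((\<lambda>y. exp (s * y) / s) \<circ> real_of_ereal) \<longlongrightarrow> 0) (at_right (-\<infinity>))"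
    unfolding ereal_tendsto_simps using tendsto_divide[OF _ tendsto_const, of _ 0 _ s] \<open>0 < s\<close>
    by (simp add: o_def)
  have lim_x: "(((\<lambda>y. exp (s * y) / s) \<circ> real_of_ereal) \<longlongrightarrow> exp (s * x) / s) (at_left (ereal x))"
    unfolding ereal_tendsto_simps using \<open>0 < s\<close> by (auto intro!: tendsto_eq_intros)
  have deriv: "((\<lambda>y. exp (s * y) / s) has_real_derivative exp (s * y)) (at y)" for y
    using \<open>0 < s\<close> by (auto intro!: derivative_eq_intros)
  note FTC = interval_integral_FTC_nonneg[OF _ deriv _ _ lim_bot lim_x]
  show "set_integrable lborel (einterval (-\<infinity>) (ereal x)) (\<lambda>y. exp (s * y))"
    and "(LBINT y=-\<infinity>..ereal x. exp (s * y)) = exp (s * x) / s"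
    using FTC by auto
qed

lemma interval_integral_exp_above:
  fixes s x :: real
  assumes "0 < s"
  shows "set_integrable lborel (einterval (ereal x) \<infinity>) (\<lambda>y. exp (- s * y))"
    and "(LBINT y=ereal x..\<infinity>. exp (- s * y)) = exp (- s * x) / s"
proof -
  have "filterlim (\<lambda>y. - s * y) at_bot at_top"
    using \<open>0 < s\<close> by (intro filterlim_tendsto_neg_mult_at_bot[OF tendsto_const] filterlim_ident) auto
  then have "((\<lambda>y. exp (- s * y)) \<longlongrightarrow> 0) at_top" by (rule filterlim_compose[OF exp_at_bot])
  then have lim_top: "(((\<lambda>y. - exp (- s * y) / s) \<circ> real_of_ereal) \<longlongrightarrow> 0) (at_left \<infinity>)"
    unfolding ereal_tendsto_simps
    using tendsto_minus[OF tendsto_divide[OF _ tendsto_const, of _ 0 _ s]] \<open>0 < s\<close>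
    by (simp add: o_def)
  have lim_x: "(((\<lambda>y. - exp (- s * y) / s) \<circ> real_of_ereal) \<longlongrightarrow> - exp (- s * x) / s)
      (at_right (ereal x))"
    unfolding ereal_tendsto_simps using \<open>0 < s\<close> by (auto intro!: tendsto_eq_intros)
  have deriv: "((\<lambda>y. - exp (- s * y) / s) has_real_derivative exp (- s * y)) (at y)" for y
    using \<open>0 < s\<close> by (auto intro!: derivative_eq_intros)
  note FTC = interval_integral_FTC_nonneg[OF _ deriv _ _ lim_x lim_top]
  show "set_integrable lborel (einterval (ereal x) \<infinity>) (\<lambda>y. exp (- s * y))"
    and "(LBINT y=ereal x..\<infinity>. exp (- s * y)) = exp (- s * x) / s"
    using FTC by auto
qed

lemma set_integral_weighted_bound:
  fixes e u :: "real \<Rightarrow> real" and A :: "real set" and M :: real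
  assumes e: "set_integrable lborel A e" "\<And>y. 0 \<le> e y" "e \<in> borel_measurable borel"
    and u: "u \<in> borel_measurable borel" "\<And>y. \<bar>u y\<bar> \<le> M"
    and A: "A \<in> sets lborel"
  shows "set_integrable lborel A (\<lambda>y. e y * u y)"
    and "\<bar>LINT y:A|lborel. e y * u y\<bar> \<le> M * (LINT y:A|lborel. e y)"
proof -
  have bound: "\<bar>e y * u y\<bar> \<le> M * e y" for y
    using mult_left_mono[OF u(2)[of y] e(2)[of y]] e(2)[of y] by (simp add: abs_mult mult.commute)
  show int: "set_integrable lborel A (\<lambda>y. e y * u y)"
  proof (rule set_integrable_bound[OF set_integrable_mult_right[OF e(1), of M]])
    show "set_borel_measurable lborel A (\<lambda>y. e y * u y)"
      unfolding set_borel_measurable_def using e(3) u(1) A by measurable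
    show "AE y in lborel. y \<in> A \<longrightarrow> norm (e y * u y) \<le> norm (M * e y)"
      using order_trans[OF bound abs_ge_self] by simp
  qed
  have "\<bar>LINT y:A|lborel. e y * u y\<bar> \<le> (LINT y:A|lborel. \<bar>e y * u y\<bar>)"
    using set_integral_norm_bound[OF int] by simp
  also have "\<dots> \<le> (LINT y:A|lborel. M * e y)"
  proof (rule set_integral_mono)
    show "set_integrable lborel A (\<lambda>y. \<bar>e y * u y\<bar>)" using int by (rule set_integrable_abs)
    show "set_integrable lborel A (\<lambda>y. M * e y)" using e(1) by simp
  qed (rule bound)
  finally show "\<bar>LINT y:A|lborel. e y * u y\<bar> \<le> M * (LINT y:A|lborel. e y)" by simp
qed

lemma exp_abs_diff_below:
  fixes s x y v :: real
  assumes "y \<le> x"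
  shows "exp (- s * \<bar>x - y\<bar>) * v = exp (- s * x) * (exp (s * y) * v)"
proof -
  have "\<bar>x - y\<bar> = x - y" using assms by simp
  then have "- s * \<bar>x - y\<bar> = - s * x + s * y" by (simp add: algebra_simps)
  then show ?thesis by (simp only: exp_add mult.assoc)
qed

lemma exp_abs_diff_above:
  fixes s x y v :: real
  assumes "x \<le> y"
  shows "exp (- s * \<bar>x - y\<bar>) * v = exp (s * x) * (exp (- s * y) * v)"
proof -
  have "\<bar>x - y\<bar> = y - x" using assms by simp
  then have "- s * \<bar>x - y\<bar> = s * x + - s * y" by (simp add: algebra_simps)
  then show ?thesis by (simp only: exp_add mult.assoc)
qed

definition left_exp_conv :: "real \<Rightarrow> (real \<Rightarrow> real) \<Rightarrow> real \<Rightarrow> real" where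
  "left_exp_conv s u x = exp (- s * x) * (LBINT y=-\<infinity>..ereal x. exp (s * y) * u y)"

definition right_exp_conv :: "real \<Rightarrow> (real \<Rightarrow> real) \<Rightarrow> real \<Rightarrow> real" where
  "right_exp_conv s u x = exp (s * x) * (LBINT y=ereal x..\<infinity>. exp (- s * y) * u y)"

context
  fixes u :: "real \<Rightarrow> real" and M s :: real
  assumes u_cont: "continuous_on UNIV u" and u_bound: "\<And>y. \<bar>u y\<bar> \<le> M" and s_pos: "0 < s"
begin

lemma
  shows set_integrable_exp_mult_below:
      "set_integrable lborel (einterval (-\<infinity>) (ereal x)) (\<lambda>y. exp (s * y) * u y)"
    and abs_left_exp_conv_le: "\<bar>left_exp_conv s u x\<bar> \<le> M / s"
proof -
  note bound = set_integral_weighted_bound[OF interval_integral_exp_below(1)[OF s_pos, of x] _ _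
      borel_measurable_continuous_onI[OF u_cont] u_bound]
  show "set_integrable lborel (einterval (-\<infinity>) (ereal x)) (\<lambda>y. exp (s * y) * u y)"
    using bound(1) by simp
  have "\<bar>LBINT y=-\<infinity>..ereal x. exp (s * y) * u y\<bar> \<le> M * (exp (s * x) / s)"
    using bound(2) interval_integral_exp_below(2)[OF s_pos, of x]
    by (simp add: interval_lebesgue_integral_def)
  then have "exp (- s * x) * \<bar>LBINT y=-\<infinity>..ereal x. exp (s * y) * u y\<bar> \<le> exp (- s * x) * (M * (exp (s * x) / s))"
    by (intro mult_left_mono) auto
  then show "\<bar>left_exp_conv s u x\<bar> \<le> M / s"
    by (simp add: left_exp_conv_def abs_mult exp_minus field_simps)
qed

lemma
  shows set_integrable_exp_mult_above:
      "set_integrable lborel (einterval (ereal x) \<infinity>) (\<lambda>y. exp (- s * y) * u y)"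
    and abs_right_exp_conv_le: "\<bar>right_exp_conv s u x\<bar> \<le> M / s"
proof -
  note bound = set_integral_weighted_bound[OF interval_integral_exp_above(1)[OF s_pos, of x] _ _
      borel_measurable_continuous_onI[OF u_cont] u_bound]
  show "set_integrable lborel (einterval (ereal x) \<infinity>) (\<lambda>y. exp (- s * y) * u y)"
    using bound(1) by simp
  have "\<bar>LBINT y=ereal x..\<infinity>. exp (- s * y) * u y\<bar> \<le> M * (exp (- s * x) / s)"
    using bound(2) interval_integral_exp_above(2)[OF s_pos, of x]
    by (simp add: interval_lebesgue_integral_def)
  then have "exp (s * x) * \<bar>LBINT y=ereal x..\<infinity>. exp (- s * y) * u y\<bar> \<le> exp (s * x) * (M * (exp (- s * x) / s))"
    by (intro mult_left_mono) auto
  then show "\<bar>right_exp_conv s u x\<bar> \<le> M / s"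
    by (simp add: right_exp_conv_def abs_mult exp_minus field_simps)
qed

lemma left_exp_conv_has_real_derivative:
  "(left_exp_conv s u has_real_derivative u x - s * left_exp_conv s u x) (at x)"
proof -
  have "((\<lambda>x. LBINT y=-\<infinity>..ereal x. exp (s * y) * u y) has_real_derivative exp (s * x) * u x) (at x)"
    by (intro has_real_derivative_integral_from_minf continuous_intros set_integrable_exp_mult_below
        continuous_on_subset[OF u_cont]) auto
  then have "(left_exp_conv s u has_real_derivative
      - s * exp (- s * x) * (LBINT y=-\<infinity>..ereal x. exp (s * y) * u y)
      + exp (- s * x) * (exp (s * x) * u x)) (at x)"
    unfolding left_exp_conv_def[abs_def] by (auto intro!: derivative_eq_intros)
  then show ?thesis by (simp add: left_exp_conv_def mult_exp_exp algebra_simps)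
qed

lemma right_exp_conv_has_real_derivative:
  "(right_exp_conv s u has_real_derivative s * right_exp_conv s u x - u x) (at x)"
proof -
  have "((\<lambda>x. LBINT y=ereal x..\<infinity>. exp (- s * y) * u y) has_real_derivative - (exp (- s * x) * u x)) (at x)"
    by (intro has_real_derivative_integral_to_inf continuous_intros set_integrable_exp_mult_above
        continuous_on_subset[OF u_cont]) auto
  then have "(right_exp_conv s u has_real_derivative
      s * exp (s * x) * (LBINT y=ereal x..\<infinity>. exp (- s * y) * u y)
      + exp (s * x) * - (exp (- s * x) * u x)) (at x)"
    unfolding right_exp_conv_def[abs_def] by (auto intro!: derivative_eq_intros)
  then show ?thesis by (simp add: right_exp_conv_def mult_exp_exp algebra_simps)
qed

lemma set_integrable_exp_abs_mult:
  "set_integrable lborel UNIV (\<lambda>y. exp (- s * \<bar>x - y\<bar>) * u y)"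
proof -
  define g where "g y = exp (- s * \<bar>x - y\<bar>) * u y" for y
  have below: "g y = exp (- s * x) * (exp (s * y) * u y)" if "y \<le> x" for y
    unfolding g_def using that by (rule exp_abs_diff_below)
  have above: "g y = exp (s * x) * (exp (- s * y) * u y)" if "x \<le> y" for y
    unfolding g_def using that by (rule exp_abs_diff_above)
  have "set_integrable lborel (einterval (-\<infinity>) (ereal x)) (\<lambda>y. exp (- s * x) * (exp (s * y) * u y))"
    using set_integrable_exp_mult_below[of x] by simp
  then have "set_integrable lborel {..<x} g"
    by (rule set_integrable_cong[THEN iffD1, rotated -1]) (auto simp: below)
  moreover have "set_integrable lborel (einterval (ereal x) \<infinity>) (\<lambda>y. exp (s * x) * (exp (- s * y) * u y))"
    using set_integrable_exp_mult_above[of x] by simp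
  then have "set_integrable lborel {x<..} g"
    by (rule set_integrable_cong[THEN iffD1, rotated -1]) (auto simp: above)
  moreover have "set_integrable lborel {x..x} g"
    unfolding g_def
    by (intro borel_integrable_atLeastAtMost' continuous_intros continuous_on_subset[OF u_cont]) auto
  ultimately have "set_integrable lborel ({..<x} \<union> {x<..} \<union> {x..x}) g"
    by (intro set_integrable_Un) auto
  moreover have "{..<x} \<union> {x<..} \<union> {x..x} = UNIV" by auto
  ultimately show ?thesis by (simp add: g_def[abs_def])
qed

lemma integral_exp_abs_eq_exp_convs:
  "(LINT y|lborel. exp (- s * \<bar>x - y\<bar>) * u y) = left_exp_conv s u x + right_exp_conv s u x"
proof -
  define g where "g y = exp (- s * \<bar>x - y\<bar>) * u y" for y
  have below: "g y = exp (- s * x) * (exp (s * y) * u y)" if "y \<le> x" for y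
    unfolding g_def using that by (rule exp_abs_diff_below)
  have above: "g y = exp (s * x) * (exp (- s * y) * u y)" if "x \<le> y" for y
    unfolding g_def using that by (rule exp_abs_diff_above)
  have "interval_lebesgue_integrable lborel (min (-\<infinity>) (min (ereal x) \<infinity>)) (max (-\<infinity>) (max (ereal x) \<infinity>)) g"
    using set_integrable_exp_abs_mult[of x] by (simp add: g_def[abs_def] interval_lebesgue_integrable_def)
  from interval_integral_sum[OF this]
  have "(LINT y|lborel. g y) = (LBINT y=-\<infinity>..ereal x. g y) + (LBINT y=ereal x..\<infinity>. g y)"
    by (simp add: interval_lebesgue_integral_def set_lebesgue_integral_def)
  also have "(LBINT y=-\<infinity>..ereal x. g y) = left_exp_conv s u x"
    unfolding left_exp_conv_def
    by (subst interval_lebesgue_integral_cong[of _ _ g]) (auto simp: below)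
  also have "(LBINT y=ereal x..\<infinity>. g y) = right_exp_conv s u x"
    unfolding right_exp_conv_def
    by (subst interval_lebesgue_integral_cong[of _ _ g]) (auto simp: above)
  finally show ?thesis by (simp add: g_def)
qed

end

context
  fixes u :: "real \<Rightarrow> real" and M \<mu> \<nu> :: real
  assumes u_cont: "continuous_on UNIV u" and u_bound: "\<And>y. \<bar>u y\<bar> \<le> M" and \<nu>_pos: "0 < \<nu>"
begin

lemma Psi_eq_exp_convs:
  "Psi \<mu> \<nu> u x = \<mu> / (2 * sqrt \<nu>) * (left_exp_conv (sqrt \<nu>) u x + right_exp_conv (sqrt \<nu>) u x)"
  unfolding Psi_def using integral_exp_abs_eq_exp_convs[OF u_cont u_bound, of "sqrt \<nu>"] \<nu>_pos
  by simp

lemma Psi_has_real_derivative: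
  "(Psi \<mu> \<nu> u has_real_derivative
      \<mu> / 2 * (right_exp_conv (sqrt \<nu>) u x - left_exp_conv (sqrt \<nu>) u x)) (at x)"
proof -
  have s: "0 < sqrt \<nu>" using \<nu>_pos by simp
  have "((\<lambda>x. \<mu> / (2 * sqrt \<nu>) * (left_exp_conv (sqrt \<nu>) u x + right_exp_conv (sqrt \<nu>) u x))
      has_real_derivative \<mu> / (2 * sqrt \<nu>) *
        ((u x - sqrt \<nu> * left_exp_conv (sqrt \<nu>) u x) + (sqrt \<nu> * right_exp_conv (sqrt \<nu>) u x - u x)))
      (at x)"
    by (intro DERIV_cmult DERIV_add left_exp_conv_has_real_derivative[OF u_cont u_bound s]
        right_exp_conv_has_real_derivative[OF u_cont u_bound s])
  moreover have "\<mu> / (2 * sqrt \<nu>) *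
      ((u x - sqrt \<nu> * left_exp_conv (sqrt \<nu>) u x) + (sqrt \<nu> * right_exp_conv (sqrt \<nu>) u x - u x))
      = \<mu> / 2 * (right_exp_conv (sqrt \<nu>) u x - left_exp_conv (sqrt \<nu>) u x)"
    using s by (simp add: field_simps)
  moreover have "Psi \<mu> \<nu> u
      = (\<lambda>x. \<mu> / (2 * sqrt \<nu>) * (left_exp_conv (sqrt \<nu>) u x + right_exp_conv (sqrt \<nu>) u x))"
    by (rule ext) (rule Psi_eq_exp_convs)
  ultimately show ?thesis by (simp only:)
qed

lemma abs_Psi_le: "\<bar>Psi \<mu> \<nu> u x\<bar> \<le> \<bar>\<mu>\<bar> * M / \<nu>"
proof -
  have s: "0 < sqrt \<nu>" using \<nu>_pos by simp
  have "\<bar>left_exp_conv (sqrt \<nu>) u x + right_exp_conv (sqrt \<nu>) u x\<bar> \<le> 2 * M / sqrt \<nu>"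
    using abs_left_exp_conv_le[OF u_cont u_bound s, of x] abs_right_exp_conv_le[OF u_cont u_bound s, of x]
    by linarith
  then have "\<bar>\<mu>\<bar> / (2 * sqrt \<nu>) * \<bar>left_exp_conv (sqrt \<nu>) u x + right_exp_conv (sqrt \<nu>) u x\<bar>
      \<le> \<bar>\<mu>\<bar> / (2 * sqrt \<nu>) * (2 * M / sqrt \<nu>)"
    using s by (intro mult_left_mono) auto
  then show ?thesis using s \<nu>_pos by (simp add: Psi_eq_exp_convs abs_mult)
qed

lemma abs_Psi_x_le: "\<bar>Psi_x \<mu> \<nu> u x\<bar> \<le> \<bar>\<mu>\<bar> * M / sqrt \<nu>"
proof -
  have s: "0 < sqrt \<nu>" using \<nu>_pos by simp
  have "\<bar>right_exp_conv (sqrt \<nu>) u x - left_exp_conv (sqrt \<nu>) u x\<bar> \<le> 2 * M / sqrt \<nu>"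
    using abs_left_exp_conv_le[OF u_cont u_bound s, of x] abs_right_exp_conv_le[OF u_cont u_bound s, of x]
    by linarith
  then have "\<bar>\<mu>\<bar> / 2 * \<bar>right_exp_conv (sqrt \<nu>) u x - left_exp_conv (sqrt \<nu>) u x\<bar>
      \<le> \<bar>\<mu>\<bar> / 2 * (2 * M / sqrt \<nu>)"
    by (intro mult_left_mono) auto
  then show ?thesis
    unfolding Psi_x_def DERIV_imp_deriv[OF Psi_has_real_derivative] by (simp add: abs_mult)
qed

end

lemma elliptic_sol_iff_logistic_sol:
  "elliptic_sol chi b \<nu> \<mu> c r u W \<longleftrightarrow>
    logistic_sol (\<lambda>x. c - chi * Psi_x \<mu> \<nu> u x) (\<lambda>x. r x - chi * \<nu> * Psi \<mu> \<nu> u x) (b - chi * \<mu>) W"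
  by (simp add: elliptic_sol_def logistic_sol_def)

lemma elliptic_coefficients_bounded:
  fixes u r :: "real \<Rightarrow> real" and chi \<nu> \<mu> c :: real
  assumes "u \<in> Cb_unif" "bounded (range r)" "0 < \<nu>"
  obtains A Q where "\<And>x. \<bar>c - chi * Psi_x \<mu> \<nu> u x\<bar> \<le> A"
    "\<And>x. \<bar>r x - chi * \<nu> * Psi \<mu> \<nu> u x\<bar> \<le> Q"
proof -
  obtain M where u_bound: "\<And>y. \<bar>u y\<bar> \<le> M"
    using assms(1) by (auto simp: Cb_unif_def bounded_iff)
  have u_cont: "continuous_on UNIV u"
    using assms(1) by (auto simp: Cb_unif_def intro: uniformly_continuous_imp_continuous)
  obtain R where r_bound: "\<And>x. \<bar>r x\<bar> \<le> R"
    using assms(2) by (auto simp: bounded_iff)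
  show thesis
  proof (rule that)
    fix x
    have "\<bar>chi\<bar> * \<bar>Psi_x \<mu> \<nu> u x\<bar> \<le> \<bar>chi\<bar> * (\<bar>\<mu>\<bar> * M / sqrt \<nu>)"
      using abs_Psi_x_le[OF u_cont u_bound assms(3)] by (rule mult_left_mono) simp
    then show "\<bar>c - chi * Psi_x \<mu> \<nu> u x\<bar> \<le> \<bar>c\<bar> + \<bar>chi\<bar> * (\<bar>\<mu>\<bar> * M / sqrt \<nu>)"
      using abs_triangle_ineq4[of c "chi * Psi_x \<mu> \<nu> u x"] by (simp add: abs_mult)
    have "\<bar>chi * \<nu>\<bar> * \<bar>Psi \<mu> \<nu> u x\<bar> \<le> \<bar>chi * \<nu>\<bar> * (\<bar>\<mu>\<bar> * M / \<nu>)"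
      using abs_Psi_le[OF u_cont u_bound assms(3)] by (rule mult_left_mono) simp
    then show "\<bar>r x - chi * \<nu> * Psi \<mu> \<nu> u x\<bar> \<le> R + \<bar>chi * \<nu>\<bar> * (\<bar>\<mu>\<bar> * M / \<nu>)"
      using abs_triangle_ineq4[of "r x" "chi * \<nu> * Psi \<mu> \<nu> u x"] r_bound[of x]
      by (simp add: abs_mult)
  qed
qed

lemma wave_plateau_pos:
  fixes chi \<mu> b rstar \<epsilon> :: real
  assumes "0 < chi" "0 < \<mu>" "2 * chi * \<mu> < b"
    and "\<epsilon> < rstar * (b - 2 * chi * \<mu>) / (b - chi * \<mu>)"
  shows "0 < ((rstar - \<epsilon>) * (b - chi * \<mu>) - chi * \<mu> * rstar) / (b - chi * \<mu>)\<^sup>2"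
proof -
  have "0 < chi * \<mu>" using assms by simp
  then have "0 < b - chi * \<mu>" using assms by linarith
  with assms(4) have "\<epsilon> * (b - chi * \<mu>) < rstar * (b - 2 * chi * \<mu>)"
    by (simp add: field_simps)
  moreover have "(rstar - \<epsilon>) * (b - chi * \<mu>) - chi * \<mu> * rstar
      = rstar * (b - 2 * chi * \<mu>) - \<epsilon> * (b - chi * \<mu>)"
    by (simp add: algebra_simps)
  ultimately show ?thesis using \<open>0 < b - chi * \<mu>\<close> by (intro divide_pos_pos) auto
qed

theorem lemma3p4:
  fixes chi b \<nu> \<mu> c :: real
    and r :: "real \<Rightarrow> real" and rm rstar :: real
    and r1 x1 \<epsilon> ceps x0 :: real
    and \<phi> :: "real \<Rightarrow> real"
    and u Ulow Ustar :: "real \<Rightarrow> real"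
    and U :: "real \<Rightarrow> real \<Rightarrow> real"
  assumes pos: "0 < chi" "0 < b" "0 < \<nu>" "0 < \<mu>"
    and r_holder: "holder_cont r" and r_bdd: "bounded (range r)"
    and r_lim_top: "(r \<longlongrightarrow> rstar) at_top"
    and r_lim_bot: "(r \<longlongrightarrow> rm) at_bot"
    and r_signs: "rm < 0" "0 < rstar"
    and r_between: "\<And>x. rm \<le> r x \<and> r x \<le> rstar"
    and b_big: "b > 2 * chi * \<mu>"
    and c_big: "c > chi * \<mu> * rstar / (2 * sqrt \<nu> * (b - chi * \<mu>))
                    - 2 * sqrt (rstar * (b - 2 * chi * \<mu>) / (b - chi * \<mu>))"
    \<comment> \<open>choice of r_1, x_1\<close>
    and r1: "rm < r1" "r1 < 0"
    and x1: "\<And>x. x \<le> x1 \<Longrightarrow> r x \<le> r1"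
    \<comment> \<open>choice of epsilon and the traveling wave (phi_eps, c~_eps)\<close>
    and eps: "0 < \<epsilon>" "\<epsilon> < rstar * (b - 2 * chi * \<mu>) / (b - chi * \<mu>)"
    and ceps: "ceps > 2 * sqrt (rstar * (b - 2 * chi * \<mu>) / (b - chi * \<mu>))
        - (c - chi * \<mu> * rstar / (2 * sqrt \<nu> * (b - chi * \<mu>))
             + 2 * sqrt (rstar * (b - 2 * chi * \<mu>) / (b - chi * \<mu>))) / 2"
    and phi_decr: "\<And>x y. x \<le> y \<Longrightarrow> \<phi> y \<le> \<phi> x"
    and phi_ode: "\<exists>\<phi>' \<phi>''. \<forall>x. (\<phi> has_real_derivative \<phi>' x) (at x) \<and>
        (\<phi>' has_real_derivative \<phi>'' x) (at x) \<and>
        \<phi>'' x + ceps * \<phi>' x + f_eps chi b \<mu> rstar \<epsilon> (\<phi> x) = 0"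
    and phi_lim_bot: "(\<phi> \<longlongrightarrow> ((rstar - \<epsilon>) * (b - chi * \<mu>) - chi * \<mu> * rstar) / (b - chi * \<mu>)^2) at_bot"
    and phi_lim_top: "(\<phi> \<longlongrightarrow> - \<epsilon>) at_top"
    \<comment> \<open>psi_eps(x) = phi_eps(-x) (translation absorbed into phi), psi_eps(x_0) = 0\<close>
    and x0: "x0 > x1" "\<phi> (- x0) = 0" "\<And>x. x > x0 \<Longrightarrow> r x \<ge> rstar - \<epsilon>"
    \<comment> \<open>u in E_1\<close>
    and u_E1: "u \<in> Cb_unif"
      "\<And>x. max (\<phi> (- x)) 0 \<le> u x"
      "\<And>x. u x \<le> min (rstar / (b - chi * \<mu>))
             (rstar / (b - chi * \<mu>) * exp ((- c + sqrt (c^2 - 4 * r1)) / 2 * (x - x1)))"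
    \<comment> \<open>U(t,x;u) with initial datum U_1^+ and U_1^*(x;u) its limit as t \<rightarrow> \<infinity>\<close>
    and U_sol: "parabolic_sol chi b \<nu> \<mu> c r u
        (\<lambda>x. min (rstar / (b - chi * \<mu>))
             (rstar / (b - chi * \<mu>) * exp ((- c + sqrt (c^2 - 4 * r1)) / 2 * (x - x1)))) U"
    and U_lim: "\<And>x. ((\<lambda>t. U t x) \<longlongrightarrow> Ustar x) at_top"
    and Ustar_E1: "Ustar \<in> Cb_unif"
      "\<And>x. max (\<phi> (- x)) 0 \<le> Ustar x"
      "\<And>x. Ustar x \<le> min (rstar / (b - chi * \<mu>))
             (rstar / (b - chi * \<mu>) * exp ((- c + sqrt (c^2 - 4 * r1)) / 2 * (x - x1)))"
    and Ustar_sol: "elliptic_sol chi b \<nu> \<mu> c r u Ustar"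
    \<comment> \<open>U_{1*}(.;u) in E_1, another solution of the elliptic equation\<close>
    and Ulow_E1: "Ulow \<in> Cb_unif"
      "\<And>x. max (\<phi> (- x)) 0 \<le> Ulow x"
      "\<And>x. Ulow x \<le> min (rstar / (b - chi * \<mu>))
             (rstar / (b - chi * \<mu>) * exp ((- c + sqrt (c^2 - 4 * r1)) / 2 * (x - x1)))"
    and Ulow_sol: "elliptic_sol chi b \<nu> \<mu> c r u Ulow"
  shows "((\<lambda>x. Ulow x / Ustar x) \<longlongrightarrow> 1) at_top"
proof -
  define \<beta> where "\<beta> = b - chi * \<mu>"
  have "0 < \<beta>" using b_big pos by (simp add: \<beta>_def)
  obtain A Q where a_bound: "\<And>x. \<bar>c - chi * Psi_x \<mu> \<nu> u x\<bar> \<le> A"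
    and q_bound: "\<And>x. \<bar>r x - chi * \<nu> * Psi \<mu> \<nu> u x\<bar> \<le> Q"
    using elliptic_coefficients_bounded[OF u_E1(1) r_bdd pos(3)] by blast
  define L where "L = ((rstar - \<epsilon>) * \<beta> - chi * \<mu> * rstar) / \<beta>\<^sup>2"
  have "0 < L" using wave_plateau_pos[OF pos(1,4) b_big eps(2)] by (simp add: L_def \<beta>_def)
  \<comment> \<open>the lower barrier \<open>\<psi>\<^sub>\<epsilon>\<close> keeps both solutions away from 0 near \<open>+\<infinity>\<close>\<close>
  have "((\<lambda>x. \<phi> (- x)) \<longlongrightarrow> L) at_top"
    using filterlim_compose[OF phi_lim_bot filterlim_uminus_at_bot_at_top] by (simp add: L_def \<beta>_def)
  from order_tendstoD(1)[OF this, of "L / 2"]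
  have barrier: "eventually (\<lambda>x. L / 2 \<le> \<phi> (- x)) at_top"
    using \<open>0 < L\<close> by (auto elim: eventually_mono)
  show ?thesis
  proof (rule logistic_sols_ratio_tendsto_one)
    show "logistic_sol (\<lambda>x. c - chi * Psi_x \<mu> \<nu> u x) (\<lambda>x. r x - chi * \<nu> * Psi \<mu> \<nu> u x) \<beta> Ustar"
      "logistic_sol (\<lambda>x. c - chi * Psi_x \<mu> \<nu> u x) (\<lambda>x. r x - chi * \<nu> * Psi \<mu> \<nu> u x) \<beta> Ulow"
      using Ustar_sol Ulow_sol by (simp_all add: elliptic_sol_iff_logistic_sol \<beta>_def)
    show "eventually (\<lambda>x. L / 2 \<le> Ustar x) at_top" "eventually (\<lambda>x. L / 2 \<le> Ulow x) at_top"
      using barrier Ustar_E1(2) Ulow_E1(2) by (auto elim!: eventually_mono intro: order_trans)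
  next
    show "0 \<le> Ustar x" "Ustar x \<le> rstar / \<beta>" "0 \<le> Ulow x" "Ulow x \<le> rstar / \<beta>" for x
      using Ustar_E1(2,3)[of x] Ulow_E1(2,3)[of x] by (simp_all add: \<beta>_def)
  qed (use a_bound q_bound \<open>0 < \<beta>\<close> \<open>0 < L\<close> in auto)
qed

end
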